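(* For any myopic equilibrium $\mathbf{s}$ of a $k$-round Funding Game with bundle sizes $m^1,\dots,m^k$, we have for each $t\in\{1,\dots,k\}$: $$\Delta^t \;\ge\; \frac{sw(\mathbf{s}^t)}{m^t} \;\ge\; \Delta^{t+1}.$$
   Context: Players $1,\dots,n$ have valuation functions $v_i:\{0,\dots,m\}\to\mathbb{R}_{\ge0}$ with $v_i(0)=0$, nondecreasing, with diminishing marginal returns $v_i(x)-v_i(x-1)\ge v_i(x+1)-v_i(x)$. A (single-round) Funding Game with $M$ items and such valuations $w_i$: each player submits a request $(x_i,\tilde v_i)$ with $x_i\in\{0,\dots,M\}$ and $0\le \tilde v_i\le w_i(x_i)$; the Highest Ratio Greedy mechanism considers requests in descending order of $\tilde v_i/x_i$ (ties in favor of lower index) and grants each in turn $\min(x_i,\text{items still available})$ items; payoff is $w_i$ of the number of items received; a Nash equilibrium is a request profile where no player can increase its payoff by changing its own valid request. A $k$-round Funding Game with bundle sizes $m^1,\dots,m^k$ (positive integers, $\sum_t m^t=m$) consists of rounds $t=1,\dots,k$; in round $t$ a single-round Funding Game $G^t$ is played with $m^t$ items and marginal valuations $v_i^t(x)=v_i(x+\alpha_i^{t-1})-v_i(\alpha_i^{t-1})$, where $X_i^t$ is the number of items player $i$ receives in round $t$ and $\alpha_i^t=\sum_{j\le t}X_i^j$, $\alpha_i^0=0$. $\mathbf{s}^t$ is the request profile in round $t$ and $\mathbf{s}=(\mathbf{s}^1,\dots,\mathbf{s}^k)$. $\mathbf{s}$ is a myopic equilibrium if each $\mathbf{s}^t$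 is a Nash equilibrium of $G^t$. $sw(\mathbf{s}^t)=\sum_i v_i^t(X_i^t)$, $sw(\mathbf{s})=\sum_i v_i(\alpha_i^k)$, and $\Delta^t=\max_i v_i^t(1)$ for $t=1,\dots,k+1$ (with $v_i^{k+1}(x)=v_i(x+\alpha_i^k)-v_i(\alpha_i^k)$). *)

theory Defs
  imports Complex_Main "HOL-Library.Product_Lexorder"
begin

text \<open>Players are indexed 0,...,n-1 (the paper's 1,...,n; the tie-breaking
  "lower index first" is preserved). A request is a pair (x, v') :: nat \<times> real.\<close>

type_synonym request = "nat \<times> real"

definition ratio :: "request \<Rightarrow> real" where
  "ratio r = snd r / real (fst r)"

definition hrg_order :: "nat \<Rightarrow> (nat \<Rightarrow> request) \<Rightarrow> nat list" where
  "hrg_order n s = sort_key (\<lambda>i. (- ratio (s i), i)) [0..<n]"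

fun grant :: "(nat \<Rightarrow> nat) \<Rightarrow> nat list \<Rightarrow> nat \<Rightarrow> (nat \<Rightarrow> nat)" where
  "grant x [] r = (\<lambda>_. 0)"
| "grant x (i # is) r = (grant x is (r - min (x i) r))(i := min (x i) r)"

definition hrg_alloc :: "nat \<Rightarrow> nat \<Rightarrow> (nat \<Rightarrow> request) \<Rightarrow> nat \<Rightarrow> nat" where
  "hrg_alloc n M s = grant (\<lambda>i. fst (s i)) (hrg_order n s) M"

definition valid_request :: "nat \<Rightarrow> (nat \<Rightarrow> real) \<Rightarrow> request \<Rightarrow> bool" where
  "valid_request M wi r \<longleftrightarrow> fst r \<le> M \<and> 0 \<le> snd r \<and> snd r \<le> wi (fst r)"

definition nash_eq :: "nat \<Rightarrow> nat \<Rightarrow> (nat \<Rightarrow> nat \<Rightarrow> real) \<Rightarrow> (nat \<Rightarrow> request) \<Rightarrow> bool" where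
  "nash_eq n M w s \<longleftrightarrow>
     (\<forall>i<n. valid_request M (w i) (s i)) \<and>
     (\<forall>i<n. \<forall>r. valid_request M (w i) r \<longrightarrow>
        w i (hrg_alloc n M (s(i := r)) i) \<le> w i (hrg_alloc n M s i))"

definition valuation :: "nat \<Rightarrow> (nat \<Rightarrow> real) \<Rightarrow> bool" where
  "valuation m f \<longleftrightarrow> f 0 = 0 \<and> (\<forall>x\<le>m. 0 \<le> f x)
     \<and> (\<forall>x. x + 1 \<le> m \<longrightarrow> f x \<le> f (x + 1))
     \<and> (\<forall>x. 1 \<le> x \<and> x + 1 \<le> m \<longrightarrow> f x - f (x - 1) \<ge> f (x + 1) - f x)"

text \<open>Valuations are only given on {0..m}; we extend them constantly beyond m
  (there are no further items), which only matters for Delta^{k+1}.\<close>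
definition vtrunc :: "nat \<Rightarrow> (nat \<Rightarrow> nat \<Rightarrow> real) \<Rightarrow> nat \<Rightarrow> nat \<Rightarrow> real" where
  "vtrunc m v i x = v i (min x m)"

text \<open>k-round game: bundle sizes mb 1, ..., mb k; S t is the request profile of round t.\<close>
definition X :: "nat \<Rightarrow> (nat \<Rightarrow> nat) \<Rightarrow> (nat \<Rightarrow> nat \<Rightarrow> request) \<Rightarrow> nat \<Rightarrow> nat \<Rightarrow> nat" where
  "X n mb S t i = hrg_alloc n (mb t) (S t) i"

fun alpha :: "nat \<Rightarrow> (nat \<Rightarrow> nat) \<Rightarrow> (nat \<Rightarrow> nat \<Rightarrow> request) \<Rightarrow> nat \<Rightarrow> nat \<Rightarrow> nat" where
  "alpha n mb S 0 i = 0"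
| "alpha n mb S (Suc t) i = alpha n mb S t i + X n mb S (Suc t) i"

definition vmarg :: "nat \<Rightarrow> nat \<Rightarrow> (nat \<Rightarrow> nat \<Rightarrow> real) \<Rightarrow> (nat \<Rightarrow> nat)
    \<Rightarrow> (nat \<Rightarrow> nat \<Rightarrow> request) \<Rightarrow> nat \<Rightarrow> nat \<Rightarrow> nat \<Rightarrow> real" where
  "vmarg n m v mb S t i x =
     vtrunc m v i (x + alpha n mb S (t - 1) i) - vtrunc m v i (alpha n mb S (t - 1) i)"

definition myopic_eq :: "nat \<Rightarrow> nat \<Rightarrow> nat \<Rightarrow> (nat \<Rightarrow> nat \<Rightarrow> real) \<Rightarrow> (nat \<Rightarrow> nat)
    \<Rightarrow> (nat \<Rightarrow> nat \<Rightarrow> request) \<Rightarrow> bool" where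
  "myopic_eq n m k v mb S \<longleftrightarrow>
     (\<forall>t\<in>{1..k}. nash_eq n (mb t) (vmarg n m v mb S t) (S t))"

definition sw_round :: "nat \<Rightarrow> nat \<Rightarrow> (nat \<Rightarrow> nat \<Rightarrow> real) \<Rightarrow> (nat \<Rightarrow> nat)
    \<Rightarrow> (nat \<Rightarrow> nat \<Rightarrow> request) \<Rightarrow> nat \<Rightarrow> real" where
  "sw_round n m v mb S t = (\<Sum>i<n. vmarg n m v mb S t i (X n mb S t i))"

definition Delta :: "nat \<Rightarrow> nat \<Rightarrow> (nat \<Rightarrow> nat \<Rightarrow> real) \<Rightarrow> (nat \<Rightarrow> nat)
    \<Rightarrow> (nat \<Rightarrow> nat \<Rightarrow> request) \<Rightarrow> nat \<Rightarrow> real" where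
  "Delta n m v mb S t = Max ((\<lambda>i. vmarg n m v mb S t i 1) ` {..<n})"

end

theory Submission
  imports Defs
begin

(* Fix a round t with M = m^t items and marginal valuations w_i = v_i^t.  Both
   inequalities are statements about a single Nash equilibrium of the Highest
   Ratio Greedy (HRG) mechanism with valuations that have diminishing marginal
   returns (DMR):
   - Upper bound: w_i(x) <= x * w_i(1) <= x * Delta^t, and at most M items are
     handed out, so sw <= M * Delta^t.
   - Lower bound: let d be player j's marginal value for one more item.  If
     d > 0 and j got fewer than M items, j could deviate to the request
     (x_j + 1, w_j(x_j + 1)), whose ratio is >= d.  Since this does not help j,
     the players ranked before that request exhaust the supply together with j;
     each of them has ratio >= d and hence value >= d per item received, so
     sw >= d * M.  As v_j^{t+1}(1) is exactly this marginal value, Delta^{t+1}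
     <= sw / M. *)

definition marginal :: "(nat \<Rightarrow> real) \<Rightarrow> nat \<Rightarrow> real" where
  "marginal f x = f (Suc x) - f x"

definition dmr :: "(nat \<Rightarrow> real) \<Rightarrow> bool" where
  "dmr f \<longleftrightarrow> f 0 = 0 \<and> (\<forall>x. 0 \<le> marginal f x) \<and> (\<forall>x. marginal f (Suc x) \<le> marginal f x)"

lemma dmr_mono:
  assumes "dmr f" "a \<le> b"
  shows "f a \<le> f b"
  using assms(2)
proof (induction b rule: dec_induct)
  case (step k)
  have "0 \<le> marginal f k" using assms(1) by (simp add: dmr_def)
  with step show ?case by (simp add: marginal_def)
qed simp

lemma dmr_nonneg: "dmr f \<Longrightarrow> 0 \<le> f a"
  using dmr_mono[of f 0 a] by (simp add: dmr_def)

lemma dmr_marginal_antimono: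
  assumes "dmr f" "a \<le> b"
  shows "marginal f b \<le> marginal f a"
  using assms(2)
proof (induction b rule: dec_induct)
  case (step k)
  have "marginal f (Suc k) \<le> marginal f k" using assms(1) by (simp add: dmr_def)
  with step show ?case by linarith
qed simp

text \<open>Each of the first y items is worth at least the marginal value of any later item.\<close>
lemma dmr_marginal_lower:
  assumes "dmr f" "y \<le> z"
  shows "real y * marginal f z \<le> f y"
  using assms(2)
proof (induction y)
  case 0
  then show ?case using assms(1) by (simp add: dmr_def)
next
  case (Suc y)
  have "marginal f z \<le> marginal f y" using dmr_marginal_antimono[OF assms(1)] Suc by simp
  then show ?case using Suc by (simp add: marginal_def algebra_simps)
qed

lemma dmr_average_antimono:
  assumes "dmr f" "1 \<le> y" "y \<le> x"
  shows "f x / real x \<le> f y / real y"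
  using assms(3)
proof (induction x rule: dec_induct)
  case (step k)
  have k: "1 \<le> k" using step assms by simp
  have "real k * marginal f k \<le> f k" using dmr_marginal_lower[OF assms(1), of k k] by simp
  hence "f (Suc k) * real k \<le> f k * real (Suc k)" by (simp add: marginal_def algebra_simps)
  hence "f (Suc k) / real (Suc k) \<le> f k / real k" using k by (simp add: divide_simps)
  with step show ?case by linarith
qed simp

lemma dmr_upper: "dmr f \<Longrightarrow> f x \<le> real x * f 1"
  using dmr_average_antimono[of f 1 x] by (cases "x = 0") (auto simp: dmr_def divide_simps mult.commute)

lemma dmr_rate_down:
  assumes "dmr f" "a \<le> x" "d * real x \<le> f x"
  shows "d * real a \<le> f a"
proof (cases "a = 0")
  case True
  then show ?thesis using assms(1) by (simp add: dmr_def)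
next
  case False
  have "d \<le> f x / real x" using assms False by (simp add: pos_le_divide_eq)
  also have "\<dots> \<le> f a / real a" using dmr_average_antimono[OF assms(1), of a x] False assms(2)
    by simp
  finally show ?thesis using False by (simp add: pos_le_divide_eq mult.commute)
qed

lemma dmr_shift:
  assumes "dmr f"
  shows "dmr (\<lambda>x. f (x + a) - f a)"
  using assms by (simp add: dmr_def marginal_def)

lemma valuation_trunc_dmr:
  assumes "valuation m v"
  shows "dmr (\<lambda>x. v (min x m))"
proof -
  have nonneg: "v (min x m) \<le> v (min (Suc x) m)" for x
  proof (cases "Suc x \<le> m")
    case False
    then have "min x m = m" "min (Suc x) m = m" by auto
    then show ?thesis by simp
  qed (use assms in \<open>simp add: valuation_def min_def\<close>)
  have concave: "v (min (Suc (Suc x)) m) - v (min (Suc x) m) \<le> v (min (Suc x) m) - v (min x m)"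
    for x
  proof -
    consider "Suc (Suc x) \<le> m" | "Suc x = m" | "m \<le> x" by linarith
    then show ?thesis
    proof cases
      case 1
      have "v (x + 1) - v (x + 1 - 1) \<ge> v (x + 1 + 1) - v (x + 1)"
        using assms 1 unfolding valuation_def by (metis le_add2 Suc_eq_plus1)
      then show ?thesis using 1 by (simp add: min_def)
    next
      case 2
      have "v x \<le> v (Suc x)" using assms 2 unfolding valuation_def by auto
      then show ?thesis using 2 by (simp add: min_def)
    qed (simp add: min_def)
  qed
  show ?thesis
    using assms nonneg concave by (simp add: dmr_def marginal_def valuation_def)
qed

lemma grant_le: "grant x L r i \<le> x i"
  by (induction L arbitrary: r) auto

lemma grant_sum:
  "distinct L \<Longrightarrow> (\<Sum>i\<in>set L. grant x L r i) = min r (\<Sum>i\<in>set L. x i)"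
proof (induction L arbitrary: r)
  case (Cons a L)
  have "(\<Sum>i\<in>set (a # L). grant x (a # L) r i)
      = min (x a) r + (\<Sum>i\<in>set L. grant x L (r - min (x a) r) i)"
    using Cons.prems by (simp add: sum.insert_remove) (rule sum.cong, auto)
  also have "\<dots> = min (x a) r + min (r - min (x a) r) (\<Sum>i\<in>set L. x i)"
    using Cons by simp
  also have "\<dots> = min r (\<Sum>i\<in>set (a # L). x i)" using Cons.prems by auto
  finally show ?case .
qed simp

lemma grant_append:
  "distinct (A @ B) \<Longrightarrow> i \<in> set A \<Longrightarrow> grant x (A @ B) r i = grant x A r i"
  by (induction A arbitrary: r) auto

lemma sorted_filter_split:
  assumes "sorted (map f L)" "\<forall>a b. f a \<le> f b \<longrightarrow> Q b \<longrightarrow> Q a"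
  shows "L = filter Q L @ filter (\<lambda>i. \<not> Q i) L"
  using assms(1)
proof (induction L)
  case (Cons a L)
  show ?case
  proof (cases "Q a")
    case False
    have "\<forall>b\<in>set L. \<not> Q b" using Cons.prems False assms(2) by auto
    then show ?thesis using False by (simp add: filter_id_conv)
  qed (use Cons in simp)
qed simp

definition hrg_key :: "(nat \<Rightarrow> request) \<Rightarrow> nat \<Rightarrow> real \<times> nat" where
  "hrg_key s i = (- ratio (s i), i)"

lemma hrg_order_set: "set (hrg_order n s) = {..<n}"
  and hrg_order_distinct: "distinct (hrg_order n s)"
  by (auto simp: hrg_order_def)

lemma hrg_alloc_le: "hrg_alloc n M s i \<le> fst (s i)"
  using grant_le[of "\<lambda>i. fst (s i)"] by (simp add: hrg_alloc_def)

lemma hrg_alloc_sum: "(\<Sum>i<n. hrg_alloc n M s i) \<le> M"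
  using grant_sum[OF hrg_order_distinct, of "\<lambda>i. fst (s i)" n s M]
  by (simp add: hrg_alloc_def hrg_order_set)

lemma hrg_downset_sum:
  assumes "\<forall>a b. hrg_key s a \<le> hrg_key s b \<longrightarrow> Q b \<longrightarrow> Q a"
  shows "(\<Sum>i | i < n \<and> Q i. hrg_alloc n M s i) = min M (\<Sum>i | i < n \<and> Q i. fst (s i))"
proof -
  let ?L = "hrg_order n s"
  have "sorted (map (hrg_key s) ?L)"
    unfolding hrg_order_def hrg_key_def by (rule sorted_sort_key)
  then have split: "?L = filter Q ?L @ filter (\<lambda>i. \<not> Q i) ?L"
    using sorted_filter_split assms by blast
  have set_Q: "set (filter Q ?L) = {i. i < n \<and> Q i}" by (auto simp: hrg_order_set)
  have distinct: "distinct (filter Q ?L @ filter (\<lambda>i. \<not> Q i) ?L)"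
    using split hrg_order_distinct by metis
  have "hrg_alloc n M s i = grant (\<lambda>i. fst (s i)) (filter Q ?L) M i"
    if "i \<in> set (filter Q ?L)" for i
    unfolding hrg_alloc_def by (subst split) (rule grant_append[OF distinct that])
  then have "(\<Sum>i\<in>set (filter Q ?L). hrg_alloc n M s i)
      = (\<Sum>i\<in>set (filter Q ?L). grant (\<lambda>i. fst (s i)) (filter Q ?L) M i)"
    by (rule sum.cong[OF refl])
  then show ?thesis
    using grant_sum[of "filter Q ?L" "\<lambda>i. fst (s i)" M] set_Q hrg_order_distinct by simp
qed

lemma hrg_below_sum:
  fixes n M :: nat and s :: "nat \<Rightarrow> request" and \<kappa> :: "real \<times> nat"
  shows "(\<Sum>i | i < n \<and> hrg_key s i < \<kappa>. hrg_alloc n M s i)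
     = min M (\<Sum>i | i < n \<and> hrg_key s i < \<kappa>. fst (s i))"
  by (rule hrg_downset_sum) (meson le_less_trans)

lemma hrg_upto_sum:
  fixes n M :: nat and s :: "nat \<Rightarrow> request" and \<kappa> :: "real \<times> nat"
  shows "(\<Sum>i | i < n \<and> hrg_key s i \<le> \<kappa>. hrg_alloc n M s i)
     = min M (\<Sum>i | i < n \<and> hrg_key s i \<le> \<kappa>. fst (s i))"
  by (rule hrg_downset_sum) (meson order_trans)

lemma hrg_welfare_upper:
  assumes dmr: "\<forall>i<n. dmr (w i)" and n: "0 < n"
  shows "(\<Sum>i<n. w i (hrg_alloc n M s i)) \<le> real M * Max ((\<lambda>i. w i 1) ` {..<n})"
proof -
  define D where "D = Max ((\<lambda>i. w i 1) ` {..<n})"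
  define A where "A = hrg_alloc n M s"
  have D_ge: "w i 1 \<le> D" if "i < n" for i unfolding D_def using that by (intro Max_ge) auto
  have D_nonneg: "0 \<le> D" using D_ge[of 0] n dmr_nonneg[of "w 0" 1] dmr by force
  have "(\<Sum>i<n. w i (A i)) \<le> (\<Sum>i<n. real (A i) * D)"
  proof (rule sum_mono)
    fix i assume "i \<in> {..<n}"
    then have "w i (A i) \<le> real (A i) * w i 1" "w i 1 \<le> D" using dmr_upper dmr D_ge by auto
    then show "w i (A i) \<le> real (A i) * D" by (meson mult_left_mono of_nat_0_le_iff order_trans)
  qed
  also have "\<dots> = real (\<Sum>i<n. A i) * D" by (simp add: sum_distrib_right)
  also have "\<dots> \<le> real M * D"
    using hrg_alloc_sum[of n M s] D_nonneg unfolding A_def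
    by (intro mult_right_mono) (simp_all flip: of_nat_sum)
  finally show ?thesis unfolding D_def A_def .
qed

lemma ratio_rate:
  assumes "dmr w" "snd r \<le> w (fst r)" "d \<le> ratio r" "a \<le> fst r"
  shows "d * real a \<le> w a"
proof -
  have "d * real (fst r) \<le> w (fst r)"
  proof (cases "fst r = 0")
    case True
    then show ?thesis using dmr_nonneg[OF assms(1)] by simp
  next
    case False
    have "d * real (fst r) \<le> ratio r * real (fst r)" using assms(3) by (simp add: mult_right_mono)
    also have "\<dots> = snd r" using False by (simp add: ratio_def)
    finally show ?thesis using assms(2) by linarith
  qed
  then show ?thesis using dmr_rate_down[OF assms(1,4)] by blast
qed

lemma nash_no_gain_from_extra_item:
  assumes ne: "nash_eq n M w s" and dmr: "dmr (w j)" and j: "j < n"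
    and pos: "0 < marginal (w j) (hrg_alloc n M s j)" and less: "hrg_alloc n M s j < M"
  defines "xj \<equiv> hrg_alloc n M s j"
  shows "hrg_alloc n M (s(j := (Suc xj, w j (Suc xj)))) j \<le> xj"
proof (rule ccontr)
  let ?B = "hrg_alloc n M (s(j := (Suc xj, w j (Suc xj)))) j"
  assume "\<not> ?B \<le> xj"
  then have "w j (Suc xj) \<le> w j ?B" using dmr_mono[OF dmr] by simp
  moreover have "valid_request M (w j) (Suc xj, w j (Suc xj))"
    using less dmr_nonneg[OF dmr] unfolding valid_request_def xj_def by simp
  then have "w j ?B \<le> w j xj" using ne j unfolding nash_eq_def xj_def by blast
  ultimately show False using pos unfolding marginal_def xj_def by simp
qed

lemma nash_cover_by_higher_ratio:
  assumes ne: "nash_eq n M w s" and dmr: "dmr (w j)" and j: "j < n"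
    and pos: "0 < marginal (w j) (hrg_alloc n M s j)" and less: "hrg_alloc n M s j < M"
  defines "xj \<equiv> hrg_alloc n M s j"
  shows "\<exists>P \<subseteq> {..<n}. j \<notin> P \<and> (\<forall>i\<in>P. ratio (Suc xj, w j (Suc xj)) \<le> ratio (s i))
           \<and> M \<le> xj + (\<Sum>i\<in>P. hrg_alloc n M s i)"
proof -
  define s' where "s' = s(j := (Suc xj, w j (Suc xj)))"
  define \<kappa> where "\<kappa> = hrg_key s' j"
  define P where "P = {i. i < n \<and> i \<noteq> j \<and> hrg_key s i < \<kappa>}"
  define SP where "SP = (\<Sum>i\<in>P. fst (s i))"
  have jP: "j \<notin> P" and finP: "finite P" unfolding P_def by auto
  have key_other: "i \<noteq> j \<Longrightarrow> hrg_key s' i = hrg_key s i" for i by (simp add: hrg_key_def s'_def)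
  have key_j: "hrg_key s' i = \<kappa> \<Longrightarrow> i = j" for i unfolding \<kappa>_def hrg_key_def by simp
  have demand_P: "(\<Sum>i\<in>P. fst (s' i)) = SP"
    unfolding SP_def s'_def using jP by (intro sum.cong) auto
  text \<open>Under the deviation, P and then j come first in the order.\<close>
  have "{i. i < n \<and> hrg_key s' i < \<kappa>} = P"
    using key_other unfolding P_def \<kappa>_def by auto (metis less_irrefl)
  then have before: "(\<Sum>i\<in>P. hrg_alloc n M s' i) = min M SP"
    using hrg_below_sum[of n M s' \<kappa>] demand_P by auto
  have "{i. i < n \<and> hrg_key s' i \<le> \<kappa>} = insert j P"
    using key_other j key_j unfolding P_def \<kappa>_def by (auto simp: order.order_iff_strict)
  then have "(\<Sum>i\<in>insert j P. hrg_alloc n M s' i) = min M (\<Sum>i\<in>insert j P. fst (s' i))"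
    using hrg_upto_sum[of n M s' \<kappa>] by simp
  moreover have "fst (s' j) = Suc xj" by (simp add: s'_def)
  ultimately have upto: "(\<Sum>i\<in>insert j P. hrg_alloc n M s' i) = min M (SP + Suc xj)"
    using demand_P finP jP by simp
  have "hrg_alloc n M s' j \<le> xj"
    using nash_no_gain_from_extra_item[OF ne dmr j pos less] unfolding s'_def xj_def .
  then have short: "M \<le> min M SP + xj" using before upto finP jP by simp
  text \<open>Back in the equilibrium, P is still a downward closed set of players.\<close>
  have "M \<le> xj + (\<Sum>i\<in>P. hrg_alloc n M s i)"
  proof (cases "hrg_key s j < \<kappa>")
    case True
    then have "{i. i < n \<and> hrg_key s i < \<kappa>} = insert j P" using j unfolding P_def by auto
    then have "(\<Sum>i\<in>insert j P. hrg_alloc n M s i) = min M (fst (s j) + SP)"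
      using hrg_below_sum[of n M s \<kappa>] finP jP by (simp add: SP_def)
    then show ?thesis using hrg_alloc_le[of n M s j] short finP jP unfolding xj_def by simp
  next
    case False
    then have "{i. i < n \<and> hrg_key s i < \<kappa>} = P" unfolding P_def by auto
    then have "(\<Sum>i\<in>P. hrg_alloc n M s i) = min M SP"
      using hrg_below_sum[of n M s \<kappa>] unfolding SP_def by simp
    then show ?thesis using short by simp
  qed
  moreover have "ratio (Suc xj, w j (Suc xj)) \<le> ratio (s i)" if "i \<in> P" for i
    using that unfolding P_def \<kappa>_def hrg_key_def s'_def by (auto simp: less_prod_def)
  ultimately show ?thesis using jP by (intro exI[of _ P]) (auto simp: P_def)
qed

lemma welfare_ge_rate_cover:
  fixes n :: nat
  assumes Q: "Q \<subseteq> {..<n}" and d: "0 \<le> d" and cover: "M \<le> (\<Sum>i\<in>Q. a i)"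
    and rate: "\<forall>i\<in>Q. d * real (a i) \<le> u i" and nonneg: "\<forall>i<n. 0 \<le> u i"
  shows "d * real M \<le> (\<Sum>i<n. u i)"
proof -
  have "d * real M \<le> d * real (\<Sum>i\<in>Q. a i)"
    using cover d by (intro mult_left_mono of_nat_mono) simp_all
  also have "\<dots> = (\<Sum>i\<in>Q. d * real (a i))" by (simp add: sum_distrib_left)
  also have "\<dots> \<le> (\<Sum>i\<in>Q. u i)" using rate by (intro sum_mono) auto
  also have "\<dots> \<le> (\<Sum>i<n. u i)" using Q nonneg by (intro sum_mono2) auto
  finally show ?thesis .
qed

lemma nash_welfare_lower:
  assumes ne: "nash_eq n M w s" and dmr: "\<forall>i<n. dmr (w i)" and j: "j < n"
  shows "marginal (w j) (hrg_alloc n M s j) * real M \<le> (\<Sum>i<n. w i (hrg_alloc n M s i))"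
proof -
  define A where "A = hrg_alloc n M s"
  define d where "d = marginal (w j) (A j)"
  have dmr_j: "dmr (w j)" using dmr j by simp
  have nonneg: "0 \<le> w i (A i)" if "i < n" for i using dmr that dmr_nonneg by blast
  have own: "d * real (A j) \<le> w j (A j)"
    using dmr_marginal_lower[OF dmr_j, of "A j" "A j"] by (simp add: d_def mult.commute)
  have "A j \<le> M" using hrg_alloc_le[of n M s j] ne j
    unfolding nash_eq_def valid_request_def A_def by fastforce
  then consider "d \<le> 0" | "A j = M" | "0 < d" "A j < M" by linarith
  then have "d * real M \<le> (\<Sum>i<n. w i (A i))"
  proof cases
    case 1
    have "0 \<le> (\<Sum>i<n. w i (A i))" by (rule sum_nonneg) (simp add: nonneg)
    moreover have "d * real M \<le> 0" using 1 by (simp add: mult_nonpos_nonneg)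
    ultimately show ?thesis by linarith
  next
    case 2
    then show ?thesis
      using own member_le_sum[of j "{..<n}" "\<lambda>i. w i (A i)"] nonneg j by simp
  next
    case 3
    obtain P where P: "P \<subseteq> {..<n}" "j \<notin> P"
      and high: "\<forall>i\<in>P. ratio (Suc (A j), w j (Suc (A j))) \<le> ratio (s i)"
      and cover: "M \<le> A j + (\<Sum>i\<in>P. A i)"
      using nash_cover_by_higher_ratio[OF ne dmr_j j] 3 unfolding A_def d_def by blast
    have "d * real (Suc (A j)) \<le> w j (Suc (A j))"
      using own by (simp add: d_def marginal_def algebra_simps)
    then have "d \<le> ratio (Suc (A j), w j (Suc (A j)))" by (simp add: ratio_def pos_le_divide_eq)
    then have rate: "d * real (A i) \<le> w i (A i)" if "i \<in> P" for i
      using that high P ratio_rate[of "w i" "s i" d "A i"] dmr hrg_alloc_le[of n M s i] ne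
      unfolding nash_eq_def valid_request_def A_def by force
    have "M \<le> (\<Sum>i\<in>insert j P. A i)" using cover P finite_subset[OF P(1)] by simp
    then show ?thesis
      using welfare_ge_rate_cover[of "insert j P" n d M A "\<lambda>i. w i (A i)"] P j 3 own rate nonneg
      by simp
  qed
  then show ?thesis unfolding d_def A_def by (simp add: mult.commute)
qed

lemma vmarg_dmr:
  assumes "valuation m (v i)"
  shows "dmr (vmarg n m v mb S t i)"
proof -
  have "vmarg n m v mb S t i = (\<lambda>x. v i (min (x + alpha n mb S (t - 1) i) m)
                                     - v i (min (alpha n mb S (t - 1) i) m))"
    by (simp add: fun_eq_iff vmarg_def vtrunc_def)
  then show ?thesis using dmr_shift[OF valuation_trunc_dmr[OF assms]] by simp
qed

lemma vmarg_next_round: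
  assumes "1 \<le> t"
  shows "vmarg n m v mb S (t + 1) i 1 = marginal (vmarg n m v mb S t i) (X n mb S t i)"
proof -
  have "alpha n mb S t i = alpha n mb S (t - 1) i + X n mb S t i"
    using alpha.simps(2)[of n mb S "t - 1" i] assms by simp
  then show ?thesis by (simp add: vmarg_def marginal_def add.commute)
qed

theorem lemma1:
  fixes n m k :: nat and v :: "nat \<Rightarrow> nat \<Rightarrow> real" and mb :: "nat \<Rightarrow> nat"
    and S :: "nat \<Rightarrow> nat \<Rightarrow> request"
  assumes "0 < n"
    and "\<forall>i<n. valuation m (v i)"
    and "\<forall>t\<in>{1..k}. 0 < mb t"
    and "(\<Sum>t=1..k. mb t) = m"
    and "myopic_eq n m k v mb S"
  shows "\<forall>t\<in>{1..k}.
           Delta n m v mb S t \<ge> sw_round n m v mb S t / real (mb t) \<and>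
           sw_round n m v mb S t / real (mb t) \<ge> Delta n m v mb S (t + 1)"
proof
  fix t assume t: "t \<in> {1..k}"
  define w where "w = vmarg n m v mb S t"
  have M: "0 < mb t" using assms(3) t by simp
  have ne: "nash_eq n (mb t) w (S t)" using assms(5) t by (simp add: myopic_eq_def w_def)
  have dmr: "\<forall>i<n. dmr (w i)" using assms(2) vmarg_dmr unfolding w_def by blast
  have sw: "sw_round n m v mb S t = (\<Sum>i<n. w i (hrg_alloc n (mb t) (S t) i))"
    by (simp add: sw_round_def w_def X_def)
  have "sw_round n m v mb S t \<le> real (mb t) * Delta n m v mb S t"
    using hrg_welfare_upper[OF dmr assms(1)] sw by (simp add: Delta_def w_def)
  moreover have "Delta n m v mb S (t + 1) \<le> sw_round n m v mb S t / real (mb t)"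
    unfolding Delta_def
  proof (rule Max.boundedI)
    fix a assume "a \<in> (\<lambda>i. vmarg n m v mb S (t + 1) i 1) ` {..<n}"
    then obtain i where "i < n" "a = marginal (w i) (hrg_alloc n (mb t) (S t) i)"
      using vmarg_next_round[of t] t by (auto simp: w_def X_def)
    then show "a \<le> sw_round n m v mb S t / real (mb t)"
      using nash_welfare_lower[OF ne dmr] sw M by (simp add: le_divide_eq)
  qed (use assms(1) in auto)
  ultimately show "Delta n m v mb S t \<ge> sw_round n m v mb S t / real (mb t) \<and>
           sw_round n m v mb S t / real (mb t) \<ge> Delta n m v mb S (t + 1)"
    using M by (simp add: divide_le_eq mult.commute)
qed

end
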